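(* Let $f(x,y)=\left(x+\frac1y,\ y-\frac1y-x\right)$ be the Hénon–Devaney map, with inverse $f^{-1}(u,v)=\left(u-\frac{1}{u+v},\ u+v\right)$ defined for $u+v\neq0$. For $n\ge1$ let $T_n$ be the set of $t\in\mathbb{R}$ such that $f^{-k}(t,0)$ is defined and does not lie on the line $\{y=-x\}$ for every $k=0,1,\dots,n-1$ (so that $f^{-n}(t,0)$ is defined), and write $f^{-n}(t,0)=(f^{-n}_x(t,0),f^{-n}_y(t,0))$. Then for every $n\ge1$: (a) on each connected component of $T_n$, both functions $t\mapsto f^{-n}_x(t,0)$ and $t\mapsto f^{-n}_y(t,0)$ are increasing; (b) $f^{-(n-1)}(\{y=0\})\cap f^{-n}(\{y=0\})=\emptyset$, where $f^{-k}(\{y=0\})=\{f^{-k}(t,0): t\in T_k\}$ for $k\ge1$ and $f^{0}(\{y=0\})=\{y=0\}$. *)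

theory Defs
  imports "HOL-Analysis.Analysis"
begin

definition hd_map :: "real \<times> real \<Rightarrow> real \<times> real" where
  "hd_map p = (fst p + 1 / snd p, snd p - 1 / snd p - fst p)"

definition hd_inv :: "real \<times> real \<Rightarrow> real \<times> real" where
  "hd_inv p = (fst p - 1 / (fst p + snd p), fst p + snd p)"

definition hd_inv_iter :: "nat \<Rightarrow> real \<times> real \<Rightarrow> real \<times> real" where
  "hd_inv_iter k = hd_inv ^^ k"

definition T_set :: "nat \<Rightarrow> real set" where
  "T_set n = {t. \<forall>k<n. fst (hd_inv_iter k (t, 0)) + snd (hd_inv_iter k (t, 0)) \<noteq> 0}"

text \<open>f^{-k}({y=0}); for k = 0 this is the line {y = 0} since T_0 = UNIV.\<close>
definition preimage_line :: "nat \<Rightarrow> (real \<times> real) set" where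
  "preimage_line k = {hd_inv_iter k (t, 0) | t. t \<in> T_set k}"

end

theory Submission
  imports Defs
begin

text \<open>Write f^-k(t,0) = (x_k(t), y_k(t)) and s_k = x_k + y_k, so that x_(k+1) = x_k - 1/s_k and
  y_(k+1) = s_k. On a connected component C of T_n the continuous function s_k (k < n) never
  vanishes, hence has constant sign on C, and so 1/s_k decreases wherever s_k increases. By
  induction x_k and s_k therefore both increase strictly on C, which gives (a) since y_n = s_(n-1).
  For (b), f^-n(t,0) = f^-(n-1)(f^-1(t,0)) and f^-1 is injective, so a common point would put
  f^-1(t,0) = (t - 1/t, t) on the line y = 0, i.e. t = 0, which t \<in> T_n excludes.\<close>

lemma connected_continuous_nonzero_sign:
  fixes f :: "'a::topological_space \<Rightarrow> real"
  assumes "connected C" "continuous_on C f" "\<forall>t\<in>C. f t \<noteq> 0"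
  shows "(\<forall>t\<in>C. 0 < f t) \<or> (\<forall>t\<in>C. f t < 0)"
proof (rule ccontr)
  assume "\<not> ?thesis"
  then obtain a b where "a \<in> C" "b \<in> C" "f a \<le> 0" "0 \<le> f b"
    by (auto simp: not_less)
  moreover have "connected (f ` C)"
    using connected_continuous_image[OF assms(2,1)] .
  ultimately have "0 \<in> f ` C"
    unfolding connected_iff_interval by blast
  then show False
    using assms(3) by auto
qed

lemma strict_antimono_on_reciprocal:
  fixes s :: "'a::ord \<Rightarrow> real"
  assumes "strict_mono_on C s" "(\<forall>t\<in>C. 0 < s t) \<or> (\<forall>t\<in>C. s t < 0)"
  shows "strict_antimono_on C (\<lambda>t. 1 / s t)"
proof (rule monotone_onI)
  fix a b assume ab: "a \<in> C" "b \<in> C" "a < b"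
  with assms(1) have "s a < s b"
    by (rule monotone_onD)
  with assms(2) ab show "1 / s b < 1 / s a"
    by (auto simp: frac_less2 divide_less_eq)
qed

lemma strict_mono_on_add:
  fixes f g :: "'a::ord \<Rightarrow> 'b::strict_ordered_ab_semigroup_add"
  assumes "strict_mono_on C f" "strict_mono_on C g"
  shows "strict_mono_on C (\<lambda>t. f t + g t)"
proof (rule monotone_onI)
  fix a b assume "a \<in> C" "b \<in> C" "a < b"
  then show "f a + g a < f b + g b"
    using assms by (blast intro: add_strict_mono dest: monotone_onD)
qed

lemma strict_mono_on_diff:
  fixes f g :: "'a::ord \<Rightarrow> 'b::ordered_ab_group_add"
  assumes "strict_mono_on C f" "strict_antimono_on C g"
  shows "strict_mono_on C (\<lambda>t. f t - g t)"
proof (rule monotone_onI)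
  fix a b assume "a \<in> C" "b \<in> C" "a < b"
  then show "f a - g a < f b - g b"
    using assms by (blast intro: diff_strict_mono dest: monotone_onD)
qed

lemma hd_inv_iter_Suc: "hd_inv_iter (Suc k) p = hd_inv (hd_inv_iter k p)"
  by (simp add: hd_inv_iter_def)

lemma hd_inv_iter_Suc_right: "hd_inv_iter (Suc k) p = hd_inv_iter k (hd_inv p)"
  unfolding hd_inv_iter_def funpow_Suc_right by simp

lemma fst_hd_inv_iter_Suc:
  "fst (hd_inv_iter (Suc k) p) =
     fst (hd_inv_iter k p) - 1 / (fst (hd_inv_iter k p) + snd (hd_inv_iter k p))"
  by (simp add: hd_inv_iter_Suc hd_inv_def)

lemma snd_hd_inv_iter_Suc:
  "snd (hd_inv_iter (Suc k) p) = fst (hd_inv_iter k p) + snd (hd_inv_iter k p)"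
  by (simp add: hd_inv_iter_Suc hd_inv_def)

lemma inj_hd_inv: "inj hd_inv"
proof (rule injI)
  fix p q assume "hd_inv p = hd_inv q"
  then have "fst p + snd p = fst q + snd q" "fst p = fst q"
    by (auto simp: hd_inv_def prod_eq_iff)
  then show "p = q"
    by (simp add: prod_eq_iff)
qed

lemma inj_hd_inv_iter: "inj (hd_inv_iter k)"
  unfolding hd_inv_iter_def by (rule inj_fn[OF inj_hd_inv])

lemma T_set_nonzero:
  "t \<in> T_set n \<Longrightarrow> k < n \<Longrightarrow> fst (hd_inv_iter k (t, 0)) + snd (hd_inv_iter k (t, 0)) \<noteq> 0"
  by (simp add: T_set_def)

lemma continuous_on_hd_inv_iter:
  "k \<le> n \<Longrightarrow> continuous_on (T_set n) (\<lambda>t. hd_inv_iter k (t, 0))"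
proof (induction k)
  case 0
  then show ?case
    by (simp add: hd_inv_iter_def continuous_intros)
next
  case (Suc k)
  then have "continuous_on (T_set n) (\<lambda>t. hd_inv_iter k (t, 0))"
    by simp
  moreover have "\<forall>t\<in>T_set n. fst (hd_inv_iter k (t, 0)) + snd (hd_inv_iter k (t, 0)) \<noteq> 0"
    using Suc.prems by (simp add: T_set_nonzero)
  ultimately show ?case
    unfolding hd_inv_iter_Suc hd_inv_def by (auto intro!: continuous_intros)
qed

lemma strict_mono_on_hd_inv_iter:
  assumes "connected C" "C \<subseteq> T_set n" "k \<le> n"
  shows "strict_mono_on C (\<lambda>t. fst (hd_inv_iter k (t, 0))) \<and>
    strict_mono_on C (\<lambda>t. fst (hd_inv_iter k (t, 0)) + snd (hd_inv_iter k (t, 0)))"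
  using assms(3)
proof (induction k)
  case 0
  then show ?case
    by (auto simp: hd_inv_iter_def intro: monotone_onI)
next
  case (Suc k)
  define x where "x = (\<lambda>t. fst (hd_inv_iter k (t, 0)))"
  define s where "s = (\<lambda>t. fst (hd_inv_iter k (t, 0)) + snd (hd_inv_iter k (t, 0)))"
  have x_mono: "strict_mono_on C x" and s_mono: "strict_mono_on C s"
    using Suc.IH Suc.prems by (simp_all add: x_def s_def)
  have "continuous_on C s"
    using continuous_on_hd_inv_iter[OF \<open>Suc k \<le> n\<close>[THEN Suc_leD]] assms(2)
    unfolding s_def by (auto intro!: continuous_intros intro: continuous_on_subset)
  moreover have "\<forall>t\<in>C. s t \<noteq> 0"
  proof
    fix t assume "t \<in> C"
    with assms(2) have "t \<in> T_set n"
      by blast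
    with \<open>Suc k \<le> n\<close> show "s t \<noteq> 0"
      unfolding s_def by (simp add: T_set_nonzero)
  qed
  ultimately have "strict_antimono_on C (\<lambda>t. 1 / s t)"
    using s_mono assms(1) by (intro strict_antimono_on_reciprocal connected_continuous_nonzero_sign)
  with x_mono have x'_mono: "strict_mono_on C (\<lambda>t. x t - 1 / s t)"
    by (rule strict_mono_on_diff)
  moreover have "strict_mono_on C (\<lambda>t. (x t - 1 / s t) + s t)"
    using x'_mono s_mono by (rule strict_mono_on_add)
  ultimately show ?case
    by (simp add: fst_hd_inv_iter_Suc snd_hd_inv_iter_Suc x_def s_def)
qed

lemma preimage_line_Suc_disjoint: "preimage_line k \<inter> preimage_line (Suc k) = {}"
proof (rule ccontr)
  assume "preimage_line k \<inter> preimage_line (Suc k) \<noteq> {}"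
  then obtain t t' where eq: "hd_inv_iter k (hd_inv (t', 0)) = hd_inv_iter k (t, 0)"
    and t': "t' \<in> T_set (Suc k)"
    by (auto simp: preimage_line_def hd_inv_iter_Suc_right)
  have "hd_inv (t', 0) = (t, 0)"
    using inj_hd_inv_iter eq by (rule injD)
  then have "t' = 0"
    by (simp add: hd_inv_def)
  with T_set_nonzero[OF t', of 0] show False
    by (simp add: hd_inv_iter_def)
qed

theorem mainTheorem3:
  fixes n :: nat
  assumes "n \<ge> 1"
  shows "(\<forall>C \<in> components (T_set n).
            strict_mono_on C (\<lambda>t. fst (hd_inv_iter n (t, 0))) \<and>
            strict_mono_on C (\<lambda>t. snd (hd_inv_iter n (t, 0))))
         \<and> preimage_line (n - 1) \<inter> preimage_line n = {}"
proof -
  obtain m where n: "n = Suc m"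
    using assms by (cases n) auto
  have "strict_mono_on C (\<lambda>t. fst (hd_inv_iter n (t, 0))) \<and>
        strict_mono_on C (\<lambda>t. snd (hd_inv_iter n (t, 0)))"
    if C: "C \<in> components (T_set n)" for C
  proof -
    have "connected C" "C \<subseteq> T_set n"
      using in_components_connected[OF C] in_components_subset[OF C] by auto
    then show ?thesis
      using strict_mono_on_hd_inv_iter[of C n n] strict_mono_on_hd_inv_iter[of C n m]
      by (simp add: n snd_hd_inv_iter_Suc)
  qed
  moreover have "preimage_line (n - 1) \<inter> preimage_line n = {}"
    using preimage_line_Suc_disjoint[of m] by (simp add: n)
  ultimately show ?thesis
    by blast
qed

end
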